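(* Let $p>3$ be prime, $a,b\in\mathbb{Q}_p$, $ab\neq0$, $(a,b)\in\Delta=\Delta_1\cup\Delta_2\cup\Delta_3$. Then the equation $x^3+ax=b$ never has three roots (counted with multiplicity) with one in each of $\mathbb{Z}_p\setminus\mathbb{Z}_p^*$, $\mathbb{Z}_p^*$, $\mathbb{Q}_p\setminus\mathbb{Z}_p$. Moreover, if $(a,b)\in\Delta_2$, then for any two distinct sets $A,B\in\{\mathbb{Z}_p\setminus\mathbb{Z}_p^*,\ \mathbb{Z}_p^*,\ \mathbb{Q}_p\setminus\mathbb{Z}_p\}$ and $m,n>0$ with $m+n=3$, the equation is not solvable in $A^{[n]}\sqcup B^{[m]}$.
   Context: $\mathbb{Z}_p^*=\{x:|x|_p=1\}$. Nonzero $c\in\mathbb{Q}_p$ is written $c=c^*/|c|_p$, $c^*=c_0+c_1p+\cdots\in\mathbb{Z}_p^*$, $c_0\in\{1,\dots,p-1\}$. "$\sqrt[3]{b}$ exists" means $b_0^{(p-1)/\gcd(3,p-1)}\equiv1\pmod p$ and $3\mid\log_p|b|_p$. $D_0=-4a_0^3-27b_0^2$; $u_1=0,u_2=-a_0,u_3=b_0,u_{n+3}=b_0u_n-a_0u_{n+1}$. $\Delta_1=\{|a|_p^3<|b|_p^2,\ \sqrt[3]{b}\text{ exists}\}$, $\Delta_2=\{|a|_p^3=|b|_p^2,\ D_0u_{p-2}^2\not\equiv 9a_0^2\pmod p\}$, $\Delta_3=\{|a|_p^3>|b|_p^2\}$. "Solvable in $A^{[n]}\sqcup B^{[m]}$"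 means exactly $n$ of the roots in $\mathbb{Q}_p$ (with multiplicity) lie in $A$ and exactly $m$ lie in $B$. *)

theory Defs
  imports "HOL-Computational_Algebra.Computational_Algebra" "HOL-Number_Theory.Cong"
begin

text \<open>A pair (type 'a, nv) satisfies
  is_Qp p nv iff 'a with the absolute value nv is a complete non-archimedean valued field of
  characteristic 0 in which the rationals (with the p-adic absolute value) are dense; such a
  pair is unique up to isometric isomorphism and is Q_p with nv = |.|_p.\<close>

definition is_Qp :: "nat \<Rightarrow> ('a::field_char_0 \<Rightarrow> real) \<Rightarrow> bool" where
  "is_Qp p nv \<longleftrightarrow>
     (\<forall>x. 0 \<le> nv x) \<and> (\<forall>x. nv x = 0 \<longleftrightarrow> x = 0) \<and>
     (\<forall>x y. nv (x * y) = nv x * nv y) \<and>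
     (\<forall>x y. nv (x + y) \<le> max (nv x) (nv y)) \<and>
     (\<forall>n::int. n \<noteq> 0 \<longrightarrow> nv (of_int n) = 1 / real p ^ multiplicity (int p) n) \<and>
     (\<forall>X::nat \<Rightarrow> 'a. (\<forall>e>0. \<exists>N. \<forall>m\<ge>N. \<forall>n\<ge>N. nv (X m - X n) < e) \<longrightarrow>
          (\<exists>L. \<forall>e>0. \<exists>N. \<forall>n\<ge>N. nv (X n - L) < e)) \<and>
     (\<forall>x e. 0 < e \<longrightarrow> (\<exists>q::rat. nv (x - of_rat q) < e))"

definition padic_ord :: "nat \<Rightarrow> ('a::field_char_0 \<Rightarrow> real) \<Rightarrow> 'a \<Rightarrow> int" where
  "padic_ord p nv c = (THE k::int. nv c = real p powr (- real_of_int k))"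

definition unit_part :: "nat \<Rightarrow> ('a::field_char_0 \<Rightarrow> real) \<Rightarrow> 'a \<Rightarrow> 'a" where
  "unit_part p nv c = c * (of_nat p) powi (- padic_ord p nv c)"

text \<open>The first p-adic digit c_0 of c* = c_0 + c_1 p + ..., c_0 in {1,...,p-1}.\<close>
definition first_digit :: "nat \<Rightarrow> ('a::field_char_0 \<Rightarrow> real) \<Rightarrow> 'a \<Rightarrow> int" where
  "first_digit p nv c =
     (THE d::int. 1 \<le> d \<and> d \<le> int p - 1 \<and> nv (unit_part p nv c - of_int d) < 1)"

text \<open>The sequence u_n (u_1 = 0, u_2 = -a0, u_3 = b0, u_{n+3} = b0 u_n - a0 u_{n+1});
  the value at index 0 is set to 1, which is consistent with the recurrence at n = 0.\<close>
fun useq :: "int \<Rightarrow> int \<Rightarrow> nat \<Rightarrow> int" where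
  "useq a0 b0 0 = 1"
| "useq a0 b0 (Suc 0) = 0"
| "useq a0 b0 (Suc (Suc 0)) = - a0"
| "useq a0 b0 (Suc (Suc (Suc n))) = b0 * useq a0 b0 n - a0 * useq a0 b0 (Suc n)"

definition D0 :: "int \<Rightarrow> int \<Rightarrow> int" where
  "D0 a0 b0 = - 4 * a0 ^ 3 - 27 * b0 ^ 2"

definition cube_root_exists :: "nat \<Rightarrow> ('a::field_char_0 \<Rightarrow> real) \<Rightarrow> 'a \<Rightarrow> bool" where
  "cube_root_exists p nv b \<longleftrightarrow>
     [first_digit p nv b ^ ((p - 1) div gcd 3 (p - 1)) = 1] (mod int p) \<and>
     (\<exists>k::int. log (real p) (nv b) = real_of_int (3 * k))"

definition Delta1 :: "nat \<Rightarrow> ('a::field_char_0 \<Rightarrow> real) \<Rightarrow> 'a \<Rightarrow> 'a \<Rightarrow> bool" where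
  "Delta1 p nv a b \<longleftrightarrow> nv a ^ 3 < nv b ^ 2 \<and> cube_root_exists p nv b"

definition Delta2 :: "nat \<Rightarrow> ('a::field_char_0 \<Rightarrow> real) \<Rightarrow> 'a \<Rightarrow> 'a \<Rightarrow> bool" where
  "Delta2 p nv a b \<longleftrightarrow> nv a ^ 3 = nv b ^ 2 \<and>
     (let a0 = first_digit p nv a; b0 = first_digit p nv b in
      \<not> [D0 a0 b0 * useq a0 b0 (p - 2) ^ 2 = 9 * a0 ^ 2] (mod int p))"

definition Delta3 :: "nat \<Rightarrow> ('a::field_char_0 \<Rightarrow> real) \<Rightarrow> 'a \<Rightarrow> 'a \<Rightarrow> bool" where
  "Delta3 p nv a b \<longleftrightarrow> nv a ^ 3 > nv b ^ 2"

definition pZp :: "('a \<Rightarrow> real) \<Rightarrow> 'a set" where "pZp nv = {x. nv x < 1}"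
definition Zp_units :: "('a \<Rightarrow> real) \<Rightarrow> 'a set" where "Zp_units nv = {x. nv x = 1}"
definition non_Zp :: "('a \<Rightarrow> real) \<Rightarrow> 'a set" where "non_Zp nv = {x. 1 < nv x}"

definition nroots_in :: "'a::field poly \<Rightarrow> 'a set \<Rightarrow> nat" where
  "nroots_in f A = (\<Sum>r\<in>{r\<in>A. poly f r = 0}. order r f)"

definition solvable_in :: "'a::field poly \<Rightarrow> 'a set \<Rightarrow> nat \<Rightarrow> 'a set \<Rightarrow> nat \<Rightarrow> bool" where
  "solvable_in f A n B m \<longleftrightarrow> nroots_in f A = n \<and> nroots_in f B = m"

end

theory Submission
  imports Defs
begin

text \<open>Only the ultrametric inequality is needed.  Three distinct roots of x^3 + a x - b sum to 0,
  so the largest absolute value among them is attained at least twice; hence no root can lie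
  outside Z_p while the other two lie in Z_p.  If |a|^3 = |b|^2, comparing the sizes of r^3 and
  a r in r^3 + a r = b forces |r|^2 = |a| for every root r, so all roots lie in the same one of
  the three regions.\<close>

lemma poly_depressed_cubic: "poly [:- b, a, 0, 1:] (x::'a::field) = x ^ 3 + a * x - b"
  by (simp add: algebra_simps power3_eq_cube)

lemma depressed_cubic_distinct_roots_sum_zero:
  fixes x y z a b :: "'a::field"
  assumes "x ^ 3 + a * x - b = 0" "y ^ 3 + a * y - b = 0" "z ^ 3 + a * z - b = 0"
    and "x \<noteq> y" "x \<noteq> z" "y \<noteq> z"
  shows "x + y + z = 0"
proof -
  have "(x - y) * (x\<^sup>2 + x * y + y\<^sup>2 + a) = 0"
    using assms(1,2) by (simp add: algebra_simps power2_eq_square power3_eq_cube)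
  with \<open>x \<noteq> y\<close> have xy: "x\<^sup>2 + x * y + y\<^sup>2 + a = 0" by simp
  have "(x - z) * (x\<^sup>2 + x * z + z\<^sup>2 + a) = 0"
    using assms(1,3) by (simp add: algebra_simps power2_eq_square power3_eq_cube)
  with \<open>x \<noteq> z\<close> have xz: "x\<^sup>2 + x * z + z\<^sup>2 + a = 0" by simp
  have "(y - z) * (x + y + z) = (x\<^sup>2 + x * y + y\<^sup>2 + a) - (x\<^sup>2 + x * z + z\<^sup>2 + a)"
    by (simp add: algebra_simps power2_eq_square)
  with xy xz \<open>y \<noteq> z\<close> show ?thesis by simp
qed

lemma nroots_in_pos_imp_root:
  assumes "0 < nroots_in f A"
  obtains r where "r \<in> A" "poly f r = 0"
  using assms unfolding nroots_in_def by (metis (mono_tags, lifting) empty_Collect_eq sum.empty less_irrefl)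

locale nonarch_abs =
  fixes nv :: "'a::field \<Rightarrow> real"
  assumes nonneg: "0 \<le> nv x"
    and eq_0_iff: "nv x = 0 \<longleftrightarrow> x = 0"
    and mult: "nv (x * y) = nv x * nv y"
    and ultrametric: "nv (x + y) \<le> max (nv x) (nv y)"
begin

lemma pos: "x \<noteq> 0 \<Longrightarrow> 0 < nv x"
  using nonneg[of x] eq_0_iff[of x] by linarith

lemma one: "nv 1 = 1"
  using mult[of 1 1] pos[of 1] by simp

lemma minus: "nv (- x) = nv x"
proof -
  have "nv (- 1) * nv (- 1) = 1"
    using mult[of "- 1" "- 1"] one by simp
  hence "nv (- 1) = 1"
    using nonneg[of "- 1"] by (metis abs_of_nonneg power2_eq_square real_sqrt_abs2 real_sqrt_one)
  thus ?thesis using mult[of "- 1" x] by simp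
qed

lemma add_eq_left: "nv y < nv x \<Longrightarrow> nv (x + y) = nv x"
  using ultrametric[of x y] ultrametric[of "x + y" "- y"] minus[of y] by auto

lemma sum_zero_le_max:
  assumes "x + y + z = 0"
  shows "nv z \<le> max (nv x) (nv y)"
proof -
  from assms have "z = - (x + y)" by (metis add.commute add_eq_0_iff)
  thus ?thesis using minus[of "x + y"] ultrametric[of x y] by simp
qed

lemma depressed_cubic_root_abs:
  assumes ab: "a * b \<noteq> 0" and eq: "nv a ^ 3 = nv b ^ 2"
    and root: "r ^ 3 + a * r - b = 0"
  shows "nv r ^ 2 = nv a"
proof -
  have b: "b = r ^ 3 + a * r" using root by (simp add: algebra_simps)
  have "a \<noteq> 0" "r \<noteq> 0" using ab b by auto
  hence A: "0 < nv a" and R: "0 < nv r" by (simp_all add: pos)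
  have cube: "nv (r ^ 3) = nv r ^ 3" and lin: "nv (a * r) = nv a * nv r"
    by (simp_all add: mult power3_eq_cube)
  consider "nv a < nv r ^ 2" | "nv r ^ 2 < nv a" | "nv r ^ 2 = nv a" by linarith
  then show ?thesis
  proof cases
    case 1
    hence "nv a * nv r < nv r ^ 3" using R by (simp add: power2_eq_square power3_eq_cube)
    hence "nv b = nv r ^ 3" using add_eq_left[of "a * r" "r ^ 3"] b cube lin by simp
    hence "nv b ^ 2 = (nv r ^ 2) ^ 3" by (simp flip: power_mult)
    moreover have "nv a ^ 3 < (nv r ^ 2) ^ 3" using 1 A by (intro power_strict_mono) auto
    ultimately show ?thesis using eq by simp
  next
    case 2
    hence "nv r ^ 3 < nv a * nv r" using R by (simp add: power2_eq_square power3_eq_cube)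
    hence "nv b = nv a * nv r"
      using add_eq_left[of "r ^ 3" "a * r"] b cube lin by (simp add: add.commute)
    hence "nv b ^ 2 = nv a ^ 2 * nv r ^ 2" by (simp add: power_mult_distrib)
    also have "\<dots> < nv a ^ 2 * nv a" using 2 A by simp
    finally show ?thesis using eq by (simp add: power2_eq_square power3_eq_cube)
  qed
qed

lemma depressed_cubic_roots_same_abs:
  assumes "a * b \<noteq> 0" "nv a ^ 3 = nv b ^ 2"
    and "r ^ 3 + a * r - b = 0" "s ^ 3 + a * s - b = 0"
  shows "nv r = nv s"
  using depressed_cubic_root_abs[OF assms(1,2,3)] depressed_cubic_root_abs[OF assms(1,2,4)]
    nonneg[of r] nonneg[of s] by (metis power2_eq_iff_nonneg)

lemma not_one_root_in_each_region:
  "\<not> (nroots_in [:- b, a, 0, 1:] (pZp nv) = 1 \<and> nroots_in [:- b, a, 0, 1:] (Zp_units nv) = 1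
       \<and> nroots_in [:- b, a, 0, 1:] (non_Zp nv) = 1)"
proof
  let ?f = "[:- b, a, 0, 1:]"
  assume H: "nroots_in ?f (pZp nv) = 1 \<and> nroots_in ?f (Zp_units nv) = 1 \<and> nroots_in ?f (non_Zp nv) = 1"
  obtain x where x: "nv x < 1" "poly ?f x = 0"
    using H nroots_in_pos_imp_root[of ?f "pZp nv"] by (auto simp: pZp_def)
  obtain y where y: "nv y = 1" "poly ?f y = 0"
    using H nroots_in_pos_imp_root[of ?f "Zp_units nv"] by (auto simp: Zp_units_def)
  obtain z where z: "1 < nv z" "poly ?f z = 0"
    using H nroots_in_pos_imp_root[of ?f "non_Zp nv"] by (auto simp: non_Zp_def)
  have "x \<noteq> y" "x \<noteq> z" "y \<noteq> z" using x y z by auto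
  with x y z have "x + y + z = 0"
    unfolding poly_depressed_cubic by (intro depressed_cubic_distinct_roots_sum_zero)
  hence "nv z \<le> max (nv x) (nv y)" by (rule sum_zero_le_max)
  with x y z show False by simp
qed

end

lemma is_Qp_imp_nonarch_abs: "is_Qp p nv \<Longrightarrow> nonarch_abs nv"
  unfolding is_Qp_def nonarch_abs_def by blast

lemma region_unique:
  assumes "A \<in> {pZp nv, Zp_units nv, non_Zp nv}" "B \<in> {pZp nv, Zp_units nv, non_Zp nv}"
    and "r \<in> A" "s \<in> B" "nv r = nv s"
  shows "A = B"
  using assms by (auto simp: pZp_def Zp_units_def non_Zp_def)

theorem mainTheorem3:
  fixes p :: nat and nv :: "'a::field_char_0 \<Rightarrow> real" and a b :: 'a
  assumes "prime p" and "p > 3" and "is_Qp p nv"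
    and "a * b \<noteq> 0"
    and "Delta1 p nv a b \<or> Delta2 p nv a b \<or> Delta3 p nv a b"
  shows "\<not> (nroots_in [:- b, a, 0, 1:] (pZp nv) = 1 \<and> nroots_in [:- b, a, 0, 1:] (Zp_units nv) = 1
             \<and> nroots_in [:- b, a, 0, 1:] (non_Zp nv) = 1)
      \<and> (Delta2 p nv a b \<longrightarrow>
           (\<forall>A B m n. A \<in> {pZp nv, Zp_units nv, non_Zp nv} \<longrightarrow>
              B \<in> {pZp nv, Zp_units nv, non_Zp nv} \<longrightarrow> A \<noteq> B \<longrightarrow>
              0 < m \<longrightarrow> 0 < n \<longrightarrow> m + n = 3 \<longrightarrow> \<not> solvable_in [:- b, a, 0, 1:] A n B m))"
proof -
  interpret nonarch_abs nv using \<open>is_Qp p nv\<close> by (rule is_Qp_imp_nonarch_abs)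
  have "\<not> solvable_in [:- b, a, 0, 1:] A n B m"
    if "Delta2 p nv a b" "A \<in> {pZp nv, Zp_units nv, non_Zp nv}"
      "B \<in> {pZp nv, Zp_units nv, non_Zp nv}" "A \<noteq> B" "0 < m" "0 < n" for A B m n
  proof
    assume "solvable_in [:- b, a, 0, 1:] A n B m"
    hence "0 < nroots_in [:- b, a, 0, 1:] A" "0 < nroots_in [:- b, a, 0, 1:] B"
      using \<open>0 < n\<close> \<open>0 < m\<close> by (simp_all add: solvable_in_def)
    then obtain r s where r: "r \<in> A" "poly [:- b, a, 0, 1:] r = 0"
      and s: "s \<in> B" "poly [:- b, a, 0, 1:] s = 0"
      by (elim nroots_in_pos_imp_root)
    have "nv a ^ 3 = nv b ^ 2" using \<open>Delta2 p nv a b\<close> by (simp add: Delta2_def)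
    with \<open>a * b \<noteq> 0\<close> have "nv r = nv s" using r(2) s(2)
      unfolding poly_depressed_cubic by (rule depressed_cubic_roots_same_abs)
    with that(2,3) r(1) s(1) have "A = B" by (rule region_unique)
    with \<open>A \<noteq> B\<close> show False ..
  qed
  with not_one_root_in_each_region show ?thesis by blast
qed

end
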